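(* Let $k\ge1$ and let $L$ be the negative $(2,2k)$-torus link (the closure of the 2-strand braid $\sigma_1^{-2k}$), with both components colored by the same color. Then the tail of the colored Jones polynomial of $L$ exists and equals $$T_L(q)=\Psi(q^{2k-1},q).$$
   Context: The false theta function is $\Psi(a,b)=\sum_{k=0}^{\infty}a^{k(k+1)/2}b^{k(k-1)/2}-\sum_{k=1}^{\infty}a^{k(k-1)/2}b^{k(k+1)/2}$. $J_{N,L}(q)$ denotes the colored Jones polynomial of a link $L$ associated to the $N$-dimensional irreducible representation of $U_q(\mathfrak{sl}_2)$ (all components colored by $N$), normalized so that $J_{N,\text{unknot}}=1$; $J_{2,L}$ is the Jones polynomial. For a Laurent polynomial $P$ (possibly in $q^{1/2}$) and a power series $S$, write $P\doteq_n S$ if there exist a sign $\varepsilon$ and an exponent $s$ such that $\varepsilon q^{s}P(q)$ is a power series in $q$ that is congruent to $S(q)$ modulo $q^n$. The tail of $L$ is a power series $T_L(q)=\sum_{j\ge0}a_jq^j$ with $J_{N,L}(q)\doteq_N T_L(q)$ for every $N\ge1$. *)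

theory Defs
  imports "HOL-Computational_Algebra.Formal_Laurent_Series"
begin

text \<open>All Laurent polynomials in q^(1/2) are represented as formal Laurent series
  in the variable t = q^(1/2) (so q = t^2), over the rationals.\<close>

definition qint :: "int \<Rightarrow> rat fls" where
  "qint c = (fls_X_intpow c - fls_X_intpow (-c)) / (fls_X_intpow 1 - fls_X_intpow (-1))"

text \<open>Colored Jones polynomial J_{N,L}(q), normalized so that the unknot gives 1,
  of the 2-component link L = closure of the 2-strand braid sigma_1^(2n), both
  components coloured by the N-dimensional irreducible U_q(sl_2)-module.
  It is computed by the Rosso--Jones / Reshetikhin--Turaev formula: V_N (x) V_N
  decomposes as the sum of V_{2j+1}, j < N, on which the braiding acts by the scalar
  (-1)^(N-1-j) q^(-j(j+1)/2 + (N^2-1)/4); the 2n-th power of this scalar is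
  q^(-n j(j+1) + n(N^2-1)/2) = t^(-2 n j(j+1) + n(N^2-1)); the quantum trace weights
  V_{2j+1} by [2j+1]; division by [N] normalizes the unknot to 1.  Both components
  are unknots with zero self-writhe, so no framing correction is needed.\<close>
definition colored_jones_T2 :: "int \<Rightarrow> nat \<Rightarrow> rat fls" where
  "colored_jones_T2 n N =
     (\<Sum>j<N. fls_X_intpow (- 2 * n * int j * (int j + 1) + n * (int N ^ 2 - 1))
              * qint (2 * int j + 1)) / qint (int N)"

text \<open>P \<doteq>_m S: there are a sign eps and an exponent s (a half-integer power of q,
  i.e. an integer power of t) such that eps q^s P(q) is a power series in q that is
  congruent to S(q) modulo q^m.\<close>
definition doteq :: "nat \<Rightarrow> rat fls \<Rightarrow> int fps \<Rightarrow> bool" where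
  "doteq m P S \<longleftrightarrow>
     (\<exists>\<epsilon>::rat. \<exists>s::int. (\<epsilon> = 1 \<or> \<epsilon> = -1) \<and>
        (let R = fls_const \<epsilon> * fls_X_intpow s * P in
           (\<forall>i<0. fls_nth R i = 0) \<and> (\<forall>i. odd i \<longrightarrow> fls_nth R i = 0) \<and>
           (\<forall>i<m. fls_nth R (2 * int i) = of_int (fps_nth S i))))"

definition is_tail :: "(nat \<Rightarrow> rat fls) \<Rightarrow> int fps \<Rightarrow> bool" where
  "is_tail J T \<longleftrightarrow> (\<forall>N\<ge>1. doteq N (J N) T)"

text \<open>The false theta function evaluated at a = q^\<alpha>, b = q^\<beta>, as a power series in q:
  Psi(a,b) = sum_{m\<ge>0} a^(m(m+1)/2) b^(m(m-1)/2) - sum_{m\<ge>1} a^(m(m-1)/2) b^(m(m+1)/2).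
  The coefficient of q^j counts the exponents equal to j (well defined for \<alpha>,\<beta> \<ge> 1).\<close>
definition false_theta :: "nat \<Rightarrow> nat \<Rightarrow> int fps" where
  "false_theta \<alpha> \<beta> = Abs_fps (\<lambda>j.
      int (card {m::nat. \<alpha> * (m * (m + 1) div 2) + \<beta> * (m * (m - 1) div 2) = j})
    - int (card {m::nat. m \<ge> 1 \<and> \<alpha> * (m * (m - 1) div 2) + \<beta> * (m * (m + 1) div 2) = j}))"

end

theory Submission
  imports Defs
begin

text \<open>The Rosso--Jones sum for J_N of the negative (2,2k) torus link
  telescopes against the denominator [N]: after normalising by a suitable power t^s, one gets
  t^s J_N (1 - q^N) = P_N with P_N = \<Sum>_{j<N} (q^(k j^2 + (k-1) j) - q^(k j^2 + (k+1) j + 1)),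
  whose exponents are exactly those of the two sums in \<Psi>(q^(2k-1), q), cut off at j < N.
  Hence t^s J_N = P_N (1 + q^N + q^(2N) + ...) is a power series in q agreeing with P_N,
  and therefore with \<Psi>(q^(2k-1), q), modulo q^N.\<close>

lemma fls_nth_times_one_minus_X_intpow:
  fixes R :: "'a::ring_1 fls"
  shows "fls_nth (R * (1 - fls_X_intpow d)) i = fls_nth R i - fls_nth R (i - d)"
  by (simp add: right_diff_distrib fls_X_intpow_times_conv_shift(2))

lemma fls_nth_shift_iterate:
  fixes R :: "'a::ring_1 fls"
  assumes "R * (1 - fls_X_intpow d) = P" and "\<And>m::nat. fls_nth P (i - d * int m) = 0"
  shows "fls_nth R i = fls_nth R (i - d * int m)"
proof (induction m)
  case (Suc m)
  have "fls_nth R (i - d * int m) = fls_nth R (i - d * int m - d)"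
    using fls_nth_times_one_minus_X_intpow[of R d "i - d * int m"] assms by simp
  with Suc show ?case by (simp add: algebra_simps)
qed simp

lemma fls_nth_vanishes_if_numerator_vanishes:
  fixes R :: "'a::ring_1 fls"
  assumes "R * (1 - fls_X_intpow d) = P" and "d > 0"
    and "\<And>m::nat. fls_nth P (i - d * int m) = 0"
  shows "fls_nth R i = 0"
proof -
  define m where "m = nat (i - fls_subdegree R) + 1"
  have "int m \<le> d * int m"
    using \<open>d > 0\<close> by (simp add: mult_le_cancel_right1)
  then have "i - d * int m < fls_subdegree R"
    unfolding m_def by linarith
  then show ?thesis
    using fls_nth_shift_iterate[OF assms(1,3), of m] by simp
qed

lemma fls_nth_eq_numerator_below_period:
  fixes R :: "'a::ring_1 fls"
  assumes "R * (1 - fls_X_intpow d) = P" and "\<And>i. i < 0 \<Longrightarrow> fls_nth P i = 0"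
    and "0 \<le> i" "i < d"
  shows "fls_nth R i = fls_nth P i"
proof -
  have "fls_nth R (i - d) = 0"
  proof (rule fls_nth_vanishes_if_numerator_vanishes[OF assms(1)])
    fix m :: nat
    have "0 \<le> d * int m" using assms(3,4) by simp
    then show "fls_nth P (i - d - d * int m) = 0" using assms(4) by (intro assms(2)) linarith
  qed (use assms in simp)
  then show ?thesis
    using fls_nth_times_one_minus_X_intpow[of R d i] assms(1) by simp
qed

lemma doteq_if_times_one_minus_X_intpow:
  assumes "fls_X_intpow s * J * (1 - fls_X_intpow (2 * int N)) = P" and "N \<ge> 1"
    and "\<And>i. i < 0 \<Longrightarrow> fls_nth P i = 0" and "\<And>i. odd i \<Longrightarrow> fls_nth P i = 0"
    and "\<And>i. i < N \<Longrightarrow> fls_nth P (2 * int i) = of_int (fps_nth S i)"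
  shows "doteq N J S"
  unfolding doteq_def Let_def
proof (rule exI[of _ 1], rule exI[of _ s], intro conjI allI impI)
  define R where "R = fls_X_intpow s * J"
  have RP: "R * (1 - fls_X_intpow (2 * int N)) = P" unfolding R_def by (fact assms(1))
  have period: "2 * int N > 0" using \<open>N \<ge> 1\<close> by simp
  have R_eq: "fls_const 1 * fls_X_intpow s * J = R" unfolding R_def by simp
  show "fls_nth (fls_const 1 * fls_X_intpow s * J) i = 0" if "i < 0" for i
    unfolding R_eq
  proof (rule fls_nth_vanishes_if_numerator_vanishes[OF RP period])
    fix m :: nat
    have "0 \<le> 2 * int N * int m" by simp
    then show "fls_nth P (i - 2 * int N * int m) = 0" using \<open>i < 0\<close> by (intro assms(3)) linarith
  qed
  show "fls_nth (fls_const 1 * fls_X_intpow s * J) i = 0" if "odd i" for i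
    unfolding R_eq
    by (rule fls_nth_vanishes_if_numerator_vanishes[OF RP period]) (use \<open>odd i\<close> assms(4) in simp)
  show "fls_nth (fls_const 1 * fls_X_intpow s * J) (2 * int i) = of_int (fps_nth S i)" if "i < N" for i
    unfolding R_eq using fls_nth_eq_numerator_below_period[OF RP assms(3)] assms(5) \<open>i < N\<close> by simp
qed simp

lemma fls_X_intpow_diff_nonzero:
  assumes "a \<noteq> b"
  shows "fls_X_intpow a - fls_X_intpow b \<noteq> (0 :: 'a::ring_1 fls)"
proof -
  have "fls_nth (fls_X_intpow a - fls_X_intpow b :: 'a fls) a = 1" using assms by simp
  then show ?thesis by (metis fls_zero_nth zero_neq_one)
qed

lemma colored_jones_T2_eq:
  assumes "N \<ge> 1"
  shows "colored_jones_T2 n N =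
    (\<Sum>j<N. fls_X_intpow (- 2 * n * int j * (int j + 1) + n * (int N ^ 2 - 1))
            * (fls_X_intpow (2 * int j + 1) - fls_X_intpow (- (2 * int j + 1))))
    / (fls_X_intpow (int N) - fls_X_intpow (- int N))"
proof -
  define D :: "rat fls" where "D = fls_X_intpow 1 - fls_X_intpow (-1)"
  have "D \<noteq> 0" unfolding D_def by (rule fls_X_intpow_diff_nonzero) simp
  moreover have "fls_X_intpow (int N) - fls_X_intpow (- int N) \<noteq> (0 :: rat fls)"
    using assms by (intro fls_X_intpow_diff_nonzero) simp
  ultimately show ?thesis
    unfolding colored_jones_T2_def qint_def D_def[symmetric]
    by (simp add: sum_divide_distrib[symmetric] times_divide_eq_right)
qed

definition psi_exp_pos :: "nat \<Rightarrow> nat \<Rightarrow> nat" where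
  "psi_exp_pos k m = k * m\<^sup>2 + (k - 1) * m"

definition psi_exp_neg :: "nat \<Rightarrow> nat \<Rightarrow> nat" where
  "psi_exp_neg k j = k * j\<^sup>2 + (k + 1) * j + 1"

definition torus_numerator :: "nat \<Rightarrow> nat \<Rightarrow> rat fls" where
  "torus_numerator k N =
     (\<Sum>j<N. fls_X_intpow (2 * int (psi_exp_pos k j)) - fls_X_intpow (2 * int (psi_exp_neg k j)))"

lemma colored_jones_T2_times_one_minus_X_intpow:
  assumes "N \<ge> 1" and "k \<ge> 1"
  shows "fls_X_intpow (int k * (int N ^ 2 - 1) + 1 - int N) * colored_jones_T2 (- int k) N
           * (1 - fls_X_intpow (2 * int N)) = torus_numerator k N"
proof -
  define s where "s = int k * (int N ^ 2 - 1) + 1 - int N"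
  define E :: "rat fls" where "E = fls_X_intpow (int N) - fls_X_intpow (- int N)"
  define c where "c j = 2 * int k * int j * (int j + 1) - int k * (int N ^ 2 - 1)" for j :: nat
  define S :: "rat fls" where
    "S = (\<Sum>j<N. fls_X_intpow (c j) * (fls_X_intpow (2 * int j + 1) - fls_X_intpow (- (2 * int j + 1))))"
  have "E \<noteq> 0" unfolding E_def using assms(1) by (intro fls_X_intpow_diff_nonzero) simp
  have J: "colored_jones_T2 (- int k) N = S / E"
    unfolding colored_jones_T2_eq[OF assms(1)] S_def E_def c_def by (simp add: algebra_simps)
  have factor: "fls_X_intpow s * (1 - fls_X_intpow (2 * int N)) = - fls_X_intpow (s + int N) * E"
  proof -
    have "- fls_X_intpow (s + int N) * E
            = fls_X_intpow (s + int N + - int N) - fls_X_intpow (s + int N + int N)"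
      unfolding E_def
      by (simp only: right_diff_distrib fls_X_intpow_times_fls_X_intpow mult_minus_left) simp
    also have "\<dots> = fls_X_intpow s * (1 - fls_X_intpow (2 * int N))"
      by (simp only: right_diff_distrib fls_X_intpow_times_fls_X_intpow mult_1_right) (simp add: algebra_simps)
    finally show ?thesis ..
  qed
  have "fls_X_intpow s * colored_jones_T2 (- int k) N * (1 - fls_X_intpow (2 * int N))
          = fls_X_intpow s * (1 - fls_X_intpow (2 * int N)) * S / E"
    unfolding J by (simp add: ac_simps)
  also have "\<dots> = - fls_X_intpow (s + int N) * S"
    unfolding factor using \<open>E \<noteq> 0\<close> by simp
  also have "\<dots> = torus_numerator k N"
    unfolding S_def torus_numerator_def sum_distrib_left
  proof (rule sum.cong[OF refl])
    fix j :: nat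
    have "int (psi_exp_pos k j) = int k * int j ^ 2 + (int k - 1) * int j"
      using assms(2) by (simp add: psi_exp_pos_def of_nat_diff)
    then have pos: "s + int N + c j + - (2 * int j + 1) = 2 * int (psi_exp_pos k j)"
      unfolding s_def c_def by (simp add: algebra_simps power2_eq_square)
    have neg: "s + int N + c j + (2 * int j + 1) = 2 * int (psi_exp_neg k j)"
      unfolding s_def c_def psi_exp_neg_def by (simp add: algebra_simps power2_eq_square)
    have "- (fls_X_intpow (s + int N) :: rat fls) * (fls_X_intpow (c j)
          * (fls_X_intpow (2 * int j + 1) - fls_X_intpow (- (2 * int j + 1))))
        = fls_X_intpow (s + int N + c j + - (2 * int j + 1))
          - fls_X_intpow (s + int N + c j + (2 * int j + 1))"
      by (simp only: right_diff_distrib mult_minus_left mult.assoc[symmetric]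
          fls_X_intpow_times_fls_X_intpow add.assoc diff_minus_eq_add uminus_add_conv_diff)
    also have "\<dots> = fls_X_intpow (2 * int (psi_exp_pos k j)) - fls_X_intpow (2 * int (psi_exp_neg k j))"
      by (simp only: pos neg)
    finally show "- (fls_X_intpow (s + int N) :: rat fls) * (fls_X_intpow (c j)
          * (fls_X_intpow (2 * int j + 1) - fls_X_intpow (- (2 * int j + 1))))
        = fls_X_intpow (2 * int (psi_exp_pos k j)) - fls_X_intpow (2 * int (psi_exp_neg k j))" .
  qed
  finally show ?thesis unfolding s_def .
qed

lemma psi_exp_pos_ge: "k \<ge> 1 \<Longrightarrow> psi_exp_pos k m \<ge> m"
  unfolding psi_exp_pos_def power2_eq_square
  by (metis le_add1 le_trans mult_1 mult_le_mono1 le_square mult.assoc)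

lemma psi_exp_neg_ge: "psi_exp_neg k j \<ge> j"
  unfolding psi_exp_neg_def by simp

lemma triangular_times_2: "2 * (m * (m + 1) div 2) = m * (m + 1)" for m :: nat
  by simp

lemma false_theta_exp_pos:
  assumes "k \<ge> 1"
  shows "(2 * k - 1) * (m * (m + 1) div 2) + 1 * (m * (m - 1) div 2) = psi_exp_pos k m"
proof (cases m)
  case (Suc j)
  obtain l where k: "k = Suc l" using assms by (cases k) auto
  have "2 * ((2 * k - 1) * (m * (m + 1) div 2) + 1 * (m * (m - 1) div 2))
        = (2 * l + 1) * (m * (m + 1)) + j * (j + 1)"
    unfolding Suc k by (simp add: triangular_times_2 algebra_simps)
  also have "\<dots> = 2 * psi_exp_pos k m"
    unfolding Suc k psi_exp_pos_def by (simp add: algebra_simps power2_eq_square)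
  finally show ?thesis by simp
qed (simp add: psi_exp_pos_def)

lemma false_theta_exp_neg:
  assumes "k \<ge> 1"
  shows "(2 * k - 1) * (Suc j * (Suc j - 1) div 2) + 1 * (Suc j * (Suc j + 1) div 2)
           = psi_exp_neg k j"
proof -
  obtain l where k: "k = Suc l" using assms by (cases k) auto
  have "2 * ((2 * k - 1) * (Suc j * (Suc j - 1) div 2) + 1 * (Suc j * (Suc j + 1) div 2))
        = (2 * l + 1) * (j * (j + 1)) + Suc j * (Suc j + 1)"
    unfolding k by (simp add: triangular_times_2 algebra_simps)
  also have "\<dots> = 2 * psi_exp_neg k j"
    unfolding k psi_exp_neg_def by (simp add: algebra_simps power2_eq_square)
  finally show ?thesis by simp
qed

lemma fps_nth_false_theta:
  assumes "k \<ge> 1"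
  shows "fps_nth (false_theta (2 * k - 1) 1) i
           = int (card {m. psi_exp_pos k m = i}) - int (card {j. psi_exp_neg k j = i})"
proof -
  have "{m. (2 * k - 1) * (m * (m + 1) div 2) + 1 * (m * (m - 1) div 2) = i}
          = {m. psi_exp_pos k m = i}"
    by (simp only: false_theta_exp_pos[OF assms])
  moreover have "{m. m \<ge> 1 \<and> (2 * k - 1) * (m * (m - 1) div 2) + 1 * (m * (m + 1) div 2) = i}
          = Suc ` {j. psi_exp_neg k j = i}"
    using false_theta_exp_neg[OF assms] by (force simp: image_iff Suc_le_eq gr0_conv_Suc)
  ultimately show ?thesis
    unfolding false_theta_def fps_nth_Abs_fps by (simp only: card_image inj_Suc inj_on_subset subset_UNIV)
qed

lemma fls_nth_torus_numerator:
  "fls_nth (torus_numerator k N) n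
     = (\<Sum>j<N. of_bool (n = 2 * int (psi_exp_pos k j)) - of_bool (n = 2 * int (psi_exp_neg k j)))"
  unfolding torus_numerator_def fls_nth_sum by (simp add: of_bool_def)

lemma fls_nth_torus_numerator_eq_0:
  assumes "i < 0 \<or> odd i"
  shows "fls_nth (torus_numerator k N) i = 0"
  unfolding fls_nth_torus_numerator using assms by (intro sum.neutral) auto

lemma fls_nth_torus_numerator_even:
  assumes "k \<ge> 1" and "i < N"
  shows "fls_nth (torus_numerator k N) (2 * int i) = of_int (fps_nth (false_theta (2 * k - 1) 1) i)"
proof -
  have "{..<N} \<inter> {j. i = psi_exp_pos k j} = {j. psi_exp_pos k j = i}"
    using psi_exp_pos_ge[OF assms(1)] assms(2) by (auto intro: le_less_trans)
  moreover have "{..<N} \<inter> {j. i = psi_exp_neg k j} = {j. psi_exp_neg k j = i}"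
    using psi_exp_neg_ge assms(2) by (auto intro: le_less_trans)
  ultimately show ?thesis
    unfolding fls_nth_torus_numerator fps_nth_false_theta[OF assms(1)] sum_subtractf
    by simp
qed

theorem mainTheorem5:
  fixes k :: nat
  assumes "k \<ge> 1"
  shows "is_tail (colored_jones_T2 (- int k)) (false_theta (2 * k - 1) 1)"
  unfolding is_tail_def
proof (intro allI impI)
  fix N :: nat
  assume "N \<ge> 1"
  show "doteq N (colored_jones_T2 (- int k) N) (false_theta (2 * k - 1) 1)"
  proof (rule doteq_if_times_one_minus_X_intpow)
    show "fls_X_intpow (int k * (int N ^ 2 - 1) + 1 - int N) * colored_jones_T2 (- int k) N
            * (1 - fls_X_intpow (2 * int N)) = torus_numerator k N"
      using \<open>N \<ge> 1\<close> assms by (rule colored_jones_T2_times_one_minus_X_intpow)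
  qed (use \<open>N \<ge> 1\<close> assms in \<open>simp_all add: fls_nth_torus_numerator_eq_0 fls_nth_torus_numerator_even\<close>)
qed

end
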